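(* For all $\alpha\in\mathbb R$ and $\rho>1$, $$\lim_{n\to\infty}\max_{Q\in\mathcal P_n(\rho)}D_{\mathrm A}^{(\alpha)}(U_n\|Q)=\Delta(\alpha,\rho),$$ where $\Delta(\alpha,\rho)=\frac1{\alpha(\alpha-1)}\Big[\frac{((\rho^\alpha-1)/\alpha)^{\alpha}((\rho-\rho^\alpha)/(1-\alpha))^{1-\alpha}}{\rho-1}-1\Big]$ for $\alpha\notin\{0,1\}$ and $\Delta(1,\rho)=\Delta(0,\rho)=\frac{\rho\ln\rho}{\rho-1}-\ln\frac{e\rho\ln\rho}{\rho-1}$.
   Context: $\mathcal P_n(\rho)$: probability mass functions on $\{1,\dots,n\}$ with all masses positive and max/min mass ratio at most $\rho$; $U_n$ uniform on $\{1,\dots,n\}$. $D_{\mathrm A}^{(\alpha)}(P\|Q)=\sum_xQ(x)u_\alpha(P(x)/Q(x))$ with $u_\alpha(t)=\frac{t^\alpha-\alpha(t-1)-1}{\alpha(\alpha-1)}$ ($\alpha\notin\{0,1\}$), $u_1(t)=t\ln t+1-t$, $u_0(t)=-\ln t$. *)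

theory Defs
  imports Complex_Main
begin

definition Pn :: "nat \<Rightarrow> real \<Rightarrow> (nat \<Rightarrow> real) set" where
  "Pn n \<rho> = {Q. (\<forall>x\<in>{1..n}. Q x > 0) \<and> (\<forall>x. x \<notin> {1..n} \<longrightarrow> Q x = 0)
       \<and> (\<Sum>x\<in>{1..n}. Q x) = 1
       \<and> Max (Q ` {1..n}) / Min (Q ` {1..n}) \<le> \<rho>}"

definition U_unif :: "nat \<Rightarrow> nat \<Rightarrow> real" where
  "U_unif n = (\<lambda>x. if x \<in> {1..n} then 1 / real n else 0)"

definition u_alpha :: "real \<Rightarrow> real \<Rightarrow> real" where
  "u_alpha \<alpha> t =
     (if \<alpha> = 0 then - ln t
      else if \<alpha> = 1 then t * ln t + 1 - t
      else (t powr \<alpha> - \<alpha> * (t - 1) - 1) / (\<alpha> * (\<alpha> - 1)))"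

definition DA :: "real \<Rightarrow> nat \<Rightarrow> (nat \<Rightarrow> real) \<Rightarrow> (nat \<Rightarrow> real) \<Rightarrow> real" where
  "DA \<alpha> n P Q = (\<Sum>x\<in>{1..n}. Q x * u_alpha \<alpha> (P x / Q x))"

definition Delta :: "real \<Rightarrow> real \<Rightarrow> real" where
  "Delta \<alpha> \<rho> =
     (if \<alpha> = 0 \<or> \<alpha> = 1 then \<rho> * ln \<rho> / (\<rho> - 1) - ln (exp 1 * \<rho> * ln \<rho> / (\<rho> - 1))
      else (1 / (\<alpha> * (\<alpha> - 1))) *
        ((((\<rho> powr \<alpha> - 1) / \<alpha>) powr \<alpha> * ((\<rho> - \<rho> powr \<alpha>) / (1 - \<alpha>)) powr (1 - \<alpha>))
           / (\<rho> - 1) - 1))"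

end

theory Submission
  imports Defs "HOL-Analysis.Analysis"
begin

(* Since D^(alpha)(U_n || Q) = D^(1-alpha)(Q || U_n) = (1/n) sum_x u_(1-alpha)(n Q(x)), and the points
   n Q(x) lie in [c, c rho] with c = n min Q and have mean 1, convexity of u_(1-alpha) bounds the
   divergence by the value at 1 of the chord of u_(1-alpha) over [c, c rho].  This chord value is at
   most Delta(alpha, rho) for every c > 0 (by Bernoulli's inequality, or ln t <= t - 1 in the
   logarithmic cases), with equality at some c in [1/rho, 1].  A distribution with mass proportional
   to rho on the first floor(n theta) points and to 1 on the others has divergence exactly such a
   chord value; for suitable theta these values converge to Delta(alpha, rho). *)

section \<open>Divergence generators and duality\<close>

lemma powr_tangent_le:
  fixes x s :: real
  assumes "x > 0" and "s \<le> 0 \<or> s \<ge> 1"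
  shows "1 + s * (x - 1) \<le> x powr s"
proof -
  have "s * 1 powr (s - 1) * (x - 1) \<le> x powr s - 1 powr s"
    by (rule f''_imp_f'[of "{0<..}" "\<lambda>x. x powr s" "\<lambda>x. s * x powr (s - 1)"
        "\<lambda>x. s * ((s - 1) * x powr (s - 1 - 1))"])
      (use assms in \<open>auto intro!: derivative_eq_intros simp: mult_le_0_iff zero_le_mult_iff\<close>)
  then show ?thesis by simp
qed

lemma u_alpha_nonneg:
  assumes "\<alpha> \<noteq> 0" "\<alpha> \<noteq> 1" "t > 0"
  shows "u_alpha \<alpha> t \<ge> 0"
proof (cases "\<alpha> * (\<alpha> - 1) > 0")
  case True
  then have "\<alpha> \<le> 0 \<or> \<alpha> \<ge> 1" by (auto simp: zero_less_mult_iff)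
  then have "1 + \<alpha> * (t - 1) \<le> t powr \<alpha>" using powr_tangent_le assms(3) by blast
  then show ?thesis using True assms by (simp add: u_alpha_def)
next
  case False
  then have "\<alpha> * (\<alpha> - 1) < 0" "0 \<le> \<alpha>" "\<alpha> \<le> 1"
    using assms by (auto simp: zero_less_mult_iff mult_less_0_iff)
  moreover have "t powr \<alpha> \<le> \<alpha> * t + (1 - \<alpha>)"
    using Youngs_inequality_0[of \<alpha> "1 - \<alpha>" t 1] calculation assms(3) by simp
  ultimately show ?thesis
    using assms by (simp add: u_alpha_def divide_nonpos_neg algebra_simps)
qed

lemma convex_on_u_alpha: "convex_on {0<..} (u_alpha \<alpha>)"
proof -
  consider "\<alpha> = 0" | "\<alpha> = 1" | "\<alpha> \<noteq> 0" "\<alpha> \<noteq> 1" by blast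
  then show ?thesis
  proof cases
    case 1
    show ?thesis unfolding u_alpha_def 1
      by (rule f''_ge0_imp_convex[where f' = "\<lambda>x. - 1 / x" and f'' = "\<lambda>x. 1 / x^2"])
        (auto intro!: derivative_eq_intros simp: power2_eq_square)
  next
    case 2
    show ?thesis unfolding u_alpha_def 2
      by (rule f''_ge0_imp_convex[where f' = ln and f'' = "\<lambda>x. 1 / x"])
        (auto intro!: derivative_eq_intros)
  next
    case 3
    have "convex_on {0<..} (\<lambda>t. (t powr \<alpha> - \<alpha> * (t - 1) - 1) / (\<alpha> * (\<alpha> - 1)))"
      by (rule f''_ge0_imp_convex[where f' = "\<lambda>t. (\<alpha> * t powr (\<alpha> - 1) - \<alpha>) / (\<alpha> * (\<alpha> - 1))"
          and f'' = "\<lambda>t. \<alpha> * ((\<alpha> - 1) * t powr (\<alpha> - 1 - 1)) / (\<alpha> * (\<alpha> - 1))"])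
        (use 3 in \<open>auto intro!: derivative_eq_intros\<close>)
    then show ?thesis using 3 unfolding u_alpha_def by simp
  qed
qed

lemma continuous_on_u_alpha: "continuous_on {0<..} (u_alpha \<alpha>)"
  unfolding u_alpha_def by (cases "\<alpha> = 0"; cases "\<alpha> = 1") (auto intro!: continuous_intros)

(* For alpha in {0, 1} the generators u_0 = -ln and u_1 are dual only up to an affine term,
   which contributes q - p and cancels in sums of equal mass. *)
lemma u_alpha_swap:
  assumes "p > 0" "q > 0"
  shows "q * u_alpha \<alpha> (p / q) = p * u_alpha (1 - \<alpha>) (q / p) + (if \<alpha> = 0 \<or> \<alpha> = 1 then q - p else 0)"
proof -
  have "q * (p / q) powr \<alpha> = p * (q / p) powr (1 - \<alpha>)"
    using assms by (simp add: powr_divide powr_diff field_simps)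
  then show ?thesis
    using assms by (auto simp: u_alpha_def ln_div field_simps)
qed

lemma DA_swap:
  assumes pos: "\<And>x. x \<in> {1..n} \<Longrightarrow> P x > 0 \<and> Q x > 0"
    and mass: "(\<Sum>x\<in>{1..n}. P x) = (\<Sum>x\<in>{1..n}. Q x)"
  shows "DA \<alpha> n P Q = DA (1 - \<alpha>) n Q P"
proof -
  let ?e = "if \<alpha> = 0 \<or> \<alpha> = 1 then 1 else 0 :: real"
  have "DA \<alpha> n P Q = (\<Sum>x\<in>{1..n}. P x * u_alpha (1 - \<alpha>) (Q x / P x) + ?e * (Q x - P x))"
    unfolding DA_def
  proof (rule sum.cong)
    fix x assume "x \<in> {1..n}"
    then show "Q x * u_alpha \<alpha> (P x / Q x) = P x * u_alpha (1 - \<alpha>) (Q x / P x) + ?e * (Q x - P x)"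
      using u_alpha_swap[of "P x" "Q x" \<alpha>] pos by simp
  qed simp
  also have "\<dots> = DA (1 - \<alpha>) n Q P + ?e * ((\<Sum>x\<in>{1..n}. Q x) - (\<Sum>x\<in>{1..n}. P x))"
    by (simp only: DA_def sum.distrib sum_distrib_left sum_subtractf right_diff_distrib)
  finally show ?thesis using mass by simp
qed

lemma DA_unif_eq:
  assumes n: "n \<ge> 1" and pos: "\<And>x. x \<in> {1..n} \<Longrightarrow> Q x > 0" and mass: "(\<Sum>x\<in>{1..n}. Q x) = 1"
  shows "DA \<alpha> n (U_unif n) Q = (\<Sum>x\<in>{1..n}. 1 / real n * u_alpha (1 - \<alpha>) (real n * Q x))"
proof -
  have "DA \<alpha> n (U_unif n) Q = DA (1 - \<alpha>) n Q (U_unif n)"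
    using n pos mass by (intro DA_swap) (auto simp: U_unif_def)
  also have "\<dots> = (\<Sum>x\<in>{1..n}. 1 / real n * u_alpha (1 - \<alpha>) (real n * Q x))"
    unfolding DA_def by (rule sum.cong) (auto simp: U_unif_def mult.commute)
  finally show ?thesis .
qed

section \<open>The chord bound\<close>

definition chord :: "(real \<Rightarrow> real) \<Rightarrow> real \<Rightarrow> real \<Rightarrow> real \<Rightarrow> real" where
  "chord f a b x = f a + (f b - f a) / (b - a) * (x - a)"

lemma convex_on_sum_le_chord:
  assumes conv: "convex_on {a..b} f" and "finite S"
    and w: "\<And>i. i \<in> S \<Longrightarrow> w i \<ge> 0" "(\<Sum>i\<in>S. w i) = 1"
    and y: "\<And>i. i \<in> S \<Longrightarrow> y i \<in> {a..b}"
  shows "(\<Sum>i\<in>S. w i * f (y i)) \<le> chord f a b (\<Sum>i\<in>S. w i * y i)"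
proof -
  define s where "s = (f b - f a) / (b - a)"
  have chord_eq: "chord f a b x = f a + s * (x - a)" for x
    by (simp add: chord_def s_def)
  have "(\<Sum>i\<in>S. w i * f (y i)) \<le> (\<Sum>i\<in>S. w i * chord f a b (y i))"
    using convex_onD_Icc'[OF conv y] w(1)
    by (intro sum_mono mult_left_mono) (auto simp: chord_def algebra_simps)
  also have "\<dots> = (\<Sum>i\<in>S. w i) * f a + s * ((\<Sum>i\<in>S. w i * y i) - (\<Sum>i\<in>S. w i) * a)"
    by (simp add: chord_eq algebra_simps sum.distrib sum_subtractf sum_distrib_left
        sum_distrib_right)
  also have "\<dots> = chord f a b (\<Sum>i\<in>S. w i * y i)"
    using w(2) by (simp add: chord_eq)
  finally show ?thesis .
qed

definition chord_bound :: "real \<Rightarrow> real \<Rightarrow> real \<Rightarrow> real" where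
  "chord_bound \<alpha> \<rho> c = chord (u_alpha (1 - \<alpha>)) c (c * \<rho>) 1"

lemma chord_bound_eq:
  "chord_bound \<alpha> \<rho> c = u_alpha (1 - \<alpha>) c
     + (u_alpha (1 - \<alpha>) (c * \<rho>) - u_alpha (1 - \<alpha>) c) * (1 - c) / (c * (\<rho> - 1))"
proof -
  have "c * \<rho> - c = c * (\<rho> - 1)" by (simp add: algebra_simps)
  then show ?thesis by (simp add: chord_bound_def chord_def)
qed

lemma isCont_chord_bound:
  assumes "\<rho> > 1" "c > 0"
  shows "isCont (chord_bound \<alpha> \<rho>) c"
proof -
  have "continuous_on {0<..} (chord_bound \<alpha> \<rho>)"
    unfolding chord_bound_eq
  proof (intro continuous_intros)
    show "continuous_on {0<..} (\<lambda>c. u_alpha (1 - \<alpha>) (c * \<rho>))"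
      by (rule continuous_on_compose2[OF continuous_on_u_alpha])
        (use assms in \<open>auto intro!: continuous_intros\<close>)
  qed (use assms continuous_on_u_alpha in auto)
  then show ?thesis
    using assms by (simp add: continuous_on_eq_continuous_at)
qed

lemma DA_unif_le_chord_bound:
  assumes r: "\<rho> > 1" and n: "n \<ge> 1" and Q: "Q \<in> Pn n \<rho>"
  shows "\<exists>c>0. DA \<alpha> n (U_unif n) Q \<le> chord_bound \<alpha> \<rho> c"
proof -
  let ?S = "{1..n}"
  have pos: "\<And>x. x \<in> ?S \<Longrightarrow> Q x > 0" and mass: "(\<Sum>x\<in>?S. Q x) = 1"
    and ratio: "Max (Q ` ?S) / Min (Q ` ?S) \<le> \<rho>"
    using Q by (auto simp: Pn_def)
  have fin: "finite (Q ` ?S)" and ne: "Q ` ?S \<noteq> {}" using n by auto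
  define m where "m = Min (Q ` ?S)"
  have m: "m > 0" unfolding m_def using Min_in[OF fin ne] pos by auto
  have "Max (Q ` ?S) \<le> m * \<rho>" using ratio m by (simp add: m_def divide_le_eq mult.commute)
  then have Q_range: "Q x \<in> {m..m * \<rho>}" if "x \<in> ?S" for x
    using that fin Max_ge[OF fin] by (auto simp: m_def)
  have np: "real n > 0" using n by simp
  define a where "a = real n * m"
  have "DA \<alpha> n (U_unif n) Q = (\<Sum>x\<in>?S. 1 / real n * u_alpha (1 - \<alpha>) (real n * Q x))"
    using n pos mass by (rule DA_unif_eq)
  also have "\<dots> \<le> chord (u_alpha (1 - \<alpha>)) a (a * \<rho>) (\<Sum>x\<in>?S. 1 / real n * (real n * Q x))"
  proof (rule convex_on_sum_le_chord)
    show "convex_on {a..a * \<rho>} (u_alpha (1 - \<alpha>))"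
    proof (rule convex_on_subset[OF convex_on_u_alpha])
      show "{a..a * \<rho>} \<subseteq> {0<..}"
        using np m by (auto simp: a_def intro: less_le_trans[of 0 a])
    qed simp
    show "real n * Q x \<in> {a..a * \<rho>}" if "x \<in> ?S" for x
      using Q_range[OF that] np by (auto simp: a_def mult.assoc)
  qed (use np in auto)
  also have "(\<Sum>x\<in>?S. 1 / real n * (real n * Q x)) = 1"
    using np mass by simp
  finally have "DA \<alpha> n (U_unif n) Q \<le> chord_bound \<alpha> \<rho> a"
    by (simp add: chord_bound_def)
  moreover have "a > 0" using np m by (simp add: a_def)
  ultimately show ?thesis by blast
qed

section \<open>Maximising the chord bound\<close>

lemma ln_slope_bounds:
  fixes \<rho> :: real
  assumes "\<rho> > 1"
  shows "1 / \<rho> \<le> ln \<rho> / (\<rho> - 1)" and "ln \<rho> / (\<rho> - 1) \<le> 1"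
proof -
  have "ln (1 / \<rho>) \<le> 1 / \<rho> - 1" using assms by (intro ln_le_minus_one) simp
  then show "1 / \<rho> \<le> ln \<rho> / (\<rho> - 1)" using assms by (simp add: ln_div field_simps)
  show "ln \<rho> / (\<rho> - 1) \<le> 1" using assms ln_le_minus_one[of \<rho>] by simp
qed

lemma chord_bound_alpha_one:
  assumes "\<rho> > 1" "c > 0"
  shows "chord_bound 1 \<rho> c = - ln c - ln \<rho> / (\<rho> - 1) * (1 - c) / c"
  using assms by (simp add: chord_bound_eq u_alpha_def ln_mult)

lemma chord_bound_alpha_zero:
  assumes "\<rho> > 1" "c > 0"
  shows "chord_bound 0 \<rho> c = ln c + (1 - c) * \<rho> * (ln \<rho> / (\<rho> - 1))"
proof -
  have "chord_bound 0 \<rho> c = c * ln c + 1 - c + (c * \<rho> * ln \<rho> + (\<rho> - 1) * c * ln c - (\<rho> - 1) * c)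
      * (1 - c) / (c * (\<rho> - 1))"
    using assms by (simp add: chord_bound_eq u_alpha_def ln_mult algebra_simps)
  also have "\<dots> = ln c + (1 - c) * \<rho> * (ln \<rho> / (\<rho> - 1))"
    using assms by (simp add: field_simps)
  finally show ?thesis .
qed

lemma Delta_degenerate:
  assumes "\<rho> > 1" "\<alpha> = 0 \<or> \<alpha> = 1"
  shows "Delta \<alpha> \<rho> = \<rho> * (ln \<rho> / (\<rho> - 1)) - 1 - ln \<rho> - ln (ln \<rho> / (\<rho> - 1))"
proof -
  have "ln (exp 1 * \<rho> * ln \<rho> / (\<rho> - 1)) = ln (exp 1 * \<rho> * (ln \<rho> / (\<rho> - 1)))" by simp
  also have "\<dots> = 1 + ln \<rho> + ln (ln \<rho> / (\<rho> - 1))"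
    using assms(1) by (subst ln_mult) (auto simp: ln_mult)
  finally show ?thesis using assms(2) by (auto simp: Delta_def)
qed

definition powr_slope :: "real \<Rightarrow> real \<Rightarrow> real \<Rightarrow> real" where
  "powr_slope \<rho> a b = (\<rho> powr b - \<rho> powr a) / (b - a)"

lemma powr_slope_pos:
  assumes "\<rho> > 1" "a \<noteq> b"
  shows "powr_slope \<rho> a b > 0"
  using assms
  by (cases a b rule: linorder_cases) (auto simp: powr_slope_def zero_less_divide_iff)

lemma Delta_generic:
  assumes "\<rho> > 0" "\<alpha> \<noteq> 0" "\<alpha> \<noteq> 1"
  shows "Delta \<alpha> \<rho> = ((powr_slope \<rho> 0 \<alpha>) powr \<alpha> * (powr_slope \<rho> \<alpha> 1) powr (1 - \<alpha>) / (\<rho> - 1) - 1)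
    / (\<alpha> * (\<alpha> - 1))"
  using assms by (simp add: Delta_def powr_slope_def)

lemma powr_slope_diff_eq_u_alpha:
  assumes "\<rho> > 0" "\<alpha> \<noteq> 0" "\<alpha> \<noteq> 1"
  shows "powr_slope \<rho> \<alpha> 1 - powr_slope \<rho> 0 \<alpha> = u_alpha \<alpha> \<rho>"
  using assms by (simp add: powr_slope_def u_alpha_def field_simps)

lemma powr_slope_diff_eq_u_alpha_inverse:
  assumes "\<rho> > 0" "\<alpha> \<noteq> 0" "\<alpha> \<noteq> 1"
  shows "\<rho> * powr_slope \<rho> 0 \<alpha> - powr_slope \<rho> \<alpha> 1 = \<rho> powr (1 + \<alpha>) * u_alpha \<alpha> (1 / \<rho>)"
proof -
  have "\<rho> powr (1 + \<alpha>) * (1 / \<rho>) powr \<alpha> = \<rho>"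
    using assms by (simp add: powr_add powr_divide)
  moreover have "\<rho> powr (1 + \<alpha>) = \<rho> * \<rho> powr \<alpha>"
    using assms by (simp add: powr_add)
  ultimately show ?thesis
    using assms by (simp add: powr_slope_def u_alpha_def field_simps)
qed

lemma chord_bound_generic:
  assumes r: "\<rho> > 1" and a: "\<alpha> \<noteq> 0" "\<alpha> \<noteq> 1" and c: "c > 0"
  shows "chord_bound \<alpha> \<rho> c = (c powr (- \<alpha>) * (c * \<rho> * (\<rho> powr \<alpha> - 1) + \<rho> - \<rho> powr \<alpha>)
      / (\<rho> powr \<alpha> * (\<rho> - 1)) - 1) / (\<alpha> * (\<alpha> - 1))"
proof -
  define p where "p = c powr (- \<alpha>)"
  define t where "t = \<rho> powr \<alpha>"
  have t: "t > 0" using r by (simp add: t_def)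
  have c_pow: "c powr (1 - \<alpha>) = c * p"
    using c by (simp add: p_def powr_diff powr_minus divide_inverse)
  have r_pow: "\<rho> powr (1 - \<alpha>) = \<rho> / t"
    using r by (simp add: t_def powr_diff)
  have cr_pow: "(c * \<rho>) powr (1 - \<alpha>) = c * p * (\<rho> / t)"
    using c r by (simp add: powr_mult c_pow r_pow)
  have "c * \<rho> - c \<noteq> 0" "\<rho> - 1 \<noteq> 0" "1 - \<alpha> \<noteq> 0" "\<alpha> - 1 \<noteq> 0"
    using a c r by auto
  then show ?thesis
    using a t
    unfolding chord_bound_def chord_def u_alpha_def p_def[symmetric] t_def[symmetric]
    by (simp add: c_pow cr_pow divide_simps) (simp add: algebra_simps)
qed

lemma chord_bound_eq_Delta_minus:
  assumes r: "\<rho> > 1" and a: "\<alpha> \<noteq> 0" "\<alpha> \<noteq> 1" and x: "x > 0"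
  defines "M \<equiv> powr_slope \<rho> 0 \<alpha>" and "P \<equiv> powr_slope \<rho> \<alpha> 1"
  shows "chord_bound \<alpha> \<rho> (x * P / (\<rho> * M)) =
    Delta \<alpha> \<rho> - M powr \<alpha> * P powr (1 - \<alpha>) / (\<rho> - 1) * (x powr (- \<alpha>) * u_alpha \<alpha> x)"
proof -
  have M: "M > 0" and P: "P > 0" using powr_slope_pos r a by (auto simp: M_def P_def)
  define t where "t = \<rho> powr \<alpha>"
  define c where "c = x * P / (\<rho> * M)"
  define K where "K = M powr \<alpha> * P powr (1 - \<alpha>) / (\<rho> - 1)"
  have t: "t > 0" and c: "c > 0" using x M P r by (simp_all add: t_def c_def)
  have t_M: "t - 1 = \<alpha> * M" and t_P: "\<rho> - t = (1 - \<alpha>) * P"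
    using a r by (simp_all add: M_def P_def t_def powr_slope_def)
  have c_pow: "c powr (- \<alpha>) = x powr (- \<alpha>) * P powr (- \<alpha>) * t * M powr \<alpha>"
    using x M P r by (simp add: c_def t_def powr_mult powr_divide powr_minus divide_simps)
  have "c * \<rho> * (t - 1) = \<alpha> * x * P"
    using M r by (simp add: t_M c_def field_simps)
  then have numerator: "c * \<rho> * (t - 1) + \<rho> - t = P * (\<alpha> * x + 1 - \<alpha>)"
    using t_P by (simp add: algebra_simps)
  have P_pow: "P powr (1 - \<alpha>) = P * P powr (- \<alpha>)"
    using P by (simp add: powr_diff powr_minus divide_inverse)
  have "c powr (- \<alpha>) * (c * \<rho> * (t - 1) + \<rho> - t) / (t * (\<rho> - 1))
      = K * (x powr (- \<alpha>) * (\<alpha> * x + 1 - \<alpha>))"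
    unfolding c_pow numerator K_def P_pow using t r by (simp add: field_simps)
  also have "x powr (- \<alpha>) * (\<alpha> * x + 1 - \<alpha>) = 1 - \<alpha> * (\<alpha> - 1) * (x powr (- \<alpha>) * u_alpha \<alpha> x)"
    using a x by (simp add: u_alpha_def powr_minus field_simps)
  finally have key: "c powr (- \<alpha>) * (c * \<rho> * (t - 1) + \<rho> - t) / (t * (\<rho> - 1))
      = K * (1 - \<alpha> * (\<alpha> - 1) * (x powr (- \<alpha>) * u_alpha \<alpha> x))" .
  have CB: "chord_bound \<alpha> \<rho> c = (K * (1 - \<alpha> * (\<alpha> - 1) * (x powr (- \<alpha>) * u_alpha \<alpha> x)) - 1)
      / (\<alpha> * (\<alpha> - 1))"
    using chord_bound_generic[OF r a c] key by (simp add: t_def)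
  have D: "Delta \<alpha> \<rho> = (K - 1) / (\<alpha> * (\<alpha> - 1))"
    using Delta_generic[of \<rho> \<alpha>] r a by (simp add: K_def M_def P_def)
  have "\<alpha> * (\<alpha> - 1) \<noteq> 0" using a by simp
  then show ?thesis
    unfolding c_def[symmetric] K_def[symmetric] CB D by (simp add: field_simps)
qed

lemma chord_bound_le_Delta:
  assumes r: "\<rho> > 1" and c: "c > 0"
  shows "chord_bound \<alpha> \<rho> c \<le> Delta \<alpha> \<rho>"
proof -
  define L where "L = ln \<rho> / (\<rho> - 1)"
  have L: "L > 0" and ln_eq: "ln \<rho> = L * (\<rho> - 1)" using r by (simp_all add: L_def)
  consider "\<alpha> = 1" | "\<alpha> = 0" | "\<alpha> \<noteq> 0" "\<alpha> \<noteq> 1" by blast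
  then show ?thesis
  proof cases
    case 1
    have "ln (L / c) \<le> L / c - 1" using L c by (intro ln_le_minus_one) simp
    then show ?thesis
      using 1 r c L by (simp add: chord_bound_alpha_one Delta_degenerate ln_div
          L_def[symmetric] field_simps) (simp add: ln_eq algebra_simps)
  next
    case 2
    have "ln (c * \<rho> * L) \<le> c * \<rho> * L - 1" using L c r by (intro ln_le_minus_one) simp
    then show ?thesis
      using 2 r c L by (simp add: chord_bound_alpha_zero Delta_degenerate ln_mult
          L_def[symmetric] algebra_simps)
  next
    case 3
    define M where "M = powr_slope \<rho> 0 \<alpha>"
    define P where "P = powr_slope \<rho> \<alpha> 1"
    have M: "M > 0" and P: "P > 0" using powr_slope_pos r 3 by (auto simp: M_def P_def)
    define x where "x = c * \<rho> * M / P"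
    have x: "x > 0" using c r M P by (simp add: x_def)
    have "c = x * P / (\<rho> * M)" using r M P by (simp add: x_def)
    then have "chord_bound \<alpha> \<rho> c
        = Delta \<alpha> \<rho> - M powr \<alpha> * P powr (1 - \<alpha>) / (\<rho> - 1) * (x powr (- \<alpha>) * u_alpha \<alpha> x)"
      using chord_bound_eq_Delta_minus[OF r 3 x] by (simp add: M_def P_def)
    moreover have "M powr \<alpha> * P powr (1 - \<alpha>) / (\<rho> - 1) * (x powr (- \<alpha>) * u_alpha \<alpha> x) \<ge> 0"
      using r x u_alpha_nonneg[OF 3 x] by simp
    ultimately show ?thesis by simp
  qed
qed

lemma chord_bound_attains_Delta:
  assumes r: "\<rho> > 1"
  shows "\<exists>c\<in>{1 / \<rho>..1}. chord_bound \<alpha> \<rho> c = Delta \<alpha> \<rho>"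
proof -
  define L where "L = ln \<rho> / (\<rho> - 1)"
  have L: "L > 0" "1 / \<rho> \<le> L" "L \<le> 1" and ln_eq: "ln \<rho> = L * (\<rho> - 1)"
    using r ln_slope_bounds[OF r] by (simp_all add: L_def)
  consider "\<alpha> = 1" | "\<alpha> = 0" | "\<alpha> \<noteq> 0" "\<alpha> \<noteq> 1" by blast
  then show ?thesis
  proof cases
    case 1
    have "chord_bound \<alpha> \<rho> L = Delta \<alpha> \<rho>"
      using 1 r L by (simp add: chord_bound_alpha_one Delta_degenerate L_def[symmetric] field_simps)
        (simp add: ln_eq algebra_simps)
    then show ?thesis using L by auto
  next
    case 2
    have "chord_bound \<alpha> \<rho> (1 / (\<rho> * L)) = Delta \<alpha> \<rho>"
      using 2 r L by (simp add: chord_bound_alpha_zero Delta_degenerate ln_div ln_mult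
          L_def[symmetric] field_simps)
    moreover have "1 / (\<rho> * L) \<in> {1 / \<rho>..1}"
      using r L by (auto simp: field_simps)
    ultimately show ?thesis by blast
  next
    case 3
    define M where "M = powr_slope \<rho> 0 \<alpha>"
    define P where "P = powr_slope \<rho> \<alpha> 1"
    have M: "M > 0" and P: "P > 0" using powr_slope_pos r 3 by (auto simp: M_def P_def)
    have "chord_bound \<alpha> \<rho> (1 * P / (\<rho> * M)) = Delta \<alpha> \<rho>"
      using chord_bound_eq_Delta_minus[OF r 3, of 1] by (simp add: M_def P_def u_alpha_def)
    moreover have "M \<le> P"
      using powr_slope_diff_eq_u_alpha[of \<rho> \<alpha>] u_alpha_nonneg[OF 3, of \<rho>] r 3
      by (simp add: M_def P_def)
    moreover have "P \<le> \<rho> * M"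
    proof -
      have "0 \<le> \<rho> powr (1 + \<alpha>) * u_alpha \<alpha> (1 / \<rho>)"
        using u_alpha_nonneg[OF 3, of "1 / \<rho>"] r by simp
      then show ?thesis
        using powr_slope_diff_eq_u_alpha_inverse[of \<rho> \<alpha>] r 3 by (simp add: M_def P_def)
    qed
    ultimately show ?thesis
      using r M P by (intro bexI[of _ "P / (\<rho> * M)"]) (auto simp: field_simps)
  qed
qed

lemma DA_unif_le_Delta:
  assumes "\<rho> > 1" "n \<ge> 1" "Q \<in> Pn n \<rho>"
  shows "DA \<alpha> n (U_unif n) Q \<le> Delta \<alpha> \<rho>"
  using DA_unif_le_chord_bound[OF assms] chord_bound_le_Delta[OF assms(1)] order_trans by blast

section \<open>Two-level distributions\<close>

definition two_level_pmf :: "nat \<Rightarrow> nat \<Rightarrow> real \<Rightarrow> nat \<Rightarrow> real" where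
  "two_level_pmf n k \<rho> x =
     (if x \<in> {1..n} then (if x \<le> k then \<rho> else 1) / (real k * \<rho> + (real n - real k)) else 0)"

lemma sum_if_le_const:
  fixes A B :: real
  assumes "k \<le> n"
  shows "(\<Sum>x\<in>{1..n}. if x \<le> k then A else B) = real k * A + (real n - real k) * B"
proof -
  have "(\<Sum>x\<in>{1..n}. if x \<le> k then A else B)
      = (\<Sum>x\<in>{1..n} \<inter> {x. x \<le> k}. A) + (\<Sum>x\<in>{1..n} \<inter> - {x. x \<le> k}. B)"
    by (rule sum.If_cases) simp
  also have "{1..n} \<inter> {x. x \<le> k} = {1..k}" using assms by auto
  also have "{1..n} \<inter> - {x. x \<le> k} = {k + 1..n}" using assms by auto
  finally show ?thesis using assms by (simp add: of_nat_diff)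
qed

lemma two_level_pmf_in_Pn:
  assumes r: "\<rho> > 1" and n: "n \<ge> 1" and k: "k \<le> n"
  shows "two_level_pmf n k \<rho> \<in> Pn n \<rho>"
proof -
  let ?Q = "two_level_pmf n k \<rho>" and ?S = "{1..n}"
  define D where "D = real k * \<rho> + (real n - real k)"
  have "D = real n + real k * (\<rho> - 1)"
    by (simp add: D_def algebra_simps)
  then have D: "D > 0"
    using n r by (simp add: add_pos_nonneg)
  have Q: "?Q x = (if x \<le> k then \<rho> / D else 1 / D)" if "x \<in> ?S" for x
    using that by (simp add: two_level_pmf_def D_def)
  have "(\<Sum>x\<in>?S. ?Q x) = (\<Sum>x\<in>?S. if x \<le> k then \<rho> / D else 1 / D)"
    using Q by (intro sum.cong) auto
  also have "\<dots> = real k * (\<rho> / D) + (real n - real k) * (1 / D)"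
    using k by (rule sum_if_le_const)
  also have "\<dots> = D / D"
    by (simp only: times_divide_eq_right mult_1_right add_divide_distrib D_def)
  finally have mass: "(\<Sum>x\<in>?S. ?Q x) = 1"
    using D by simp
  have bounds: "1 / D \<le> ?Q x \<and> ?Q x \<le> \<rho> / D" if "x \<in> ?S" for x
    using Q[OF that] r D by (simp add: divide_right_mono)
  have "finite (?Q ` ?S)" "?Q ` ?S \<noteq> {}" using n by auto
  then have "Max (?Q ` ?S) \<le> \<rho> / D" and "1 / D \<le> Min (?Q ` ?S)"
    using bounds by (simp_all add: Max_le_iff Min_ge_iff)
  then have "Max (?Q ` ?S) / Min (?Q ` ?S) \<le> (\<rho> / D) / (1 / D)"
    using D r by (intro frac_le) auto
  moreover have "?Q x > 0" if "x \<in> ?S" for x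
    using bounds[OF that] D by (meson divide_pos_pos less_le_trans zero_less_one)
  ultimately show "?Q \<in> Pn n \<rho>"
    using mass D by (auto simp: Pn_def two_level_pmf_def)
qed

lemma DA_unif_two_level_pmf:
  assumes r: "\<rho> > 1" and n: "n \<ge> 1" and k: "k \<le> n"
  shows "DA \<alpha> n (U_unif n) (two_level_pmf n k \<rho>)
    = chord_bound \<alpha> \<rho> (real n / (real k * \<rho> + (real n - real k)))"
proof -
  let ?Q = "two_level_pmf n k \<rho>" and ?S = "{1..n}" and ?u = "u_alpha (1 - \<alpha>)"
  define D where "D = real k * \<rho> + (real n - real k)"
  define c where "c = real n / D"
  have D_eq: "D = real n + real k * (\<rho> - 1)"
    by (simp add: D_def algebra_simps)
  have D: "D > 0"
    unfolding D_eq using n r by (simp add: add_pos_nonneg)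
  have pos: "\<And>x. x \<in> ?S \<Longrightarrow> ?Q x > 0" and mass: "(\<Sum>x\<in>?S. ?Q x) = 1"
    using two_level_pmf_in_Pn[OF r n k] by (auto simp: Pn_def)
  have "DA \<alpha> n (U_unif n) ?Q = (\<Sum>x\<in>?S. 1 / real n * ?u (real n * ?Q x))"
    using n pos mass by (rule DA_unif_eq)
  also have "\<dots> = (\<Sum>x\<in>?S. if x \<le> k then 1 / real n * ?u (c * \<rho>) else 1 / real n * ?u c)"
    by (intro sum.cong) (auto simp: two_level_pmf_def c_def D_def)
  also have "\<dots> = (real k * ?u (c * \<rho>) + (real n - real k) * ?u c) / real n"
    using n by (simp only: sum_if_le_const[OF k]) (simp add: field_simps)
  also have "\<dots> = chord_bound \<alpha> \<rho> c"
  proof -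
    have "1 - c = real k * (\<rho> - 1) / D"
      using D by (simp add: c_def D_eq field_simps)
    then have ratio: "(1 - c) / (c * (\<rho> - 1)) = real k / real n"
      using n D r by (simp add: c_def)
    show ?thesis
      unfolding chord_bound_eq times_divide_eq_right[symmetric] ratio
      using n by (simp add: field_simps)
  qed
  finally show ?thesis by (simp add: c_def D_def)
qed

lemma floor_mult_div_tendsto:
  fixes \<theta> :: real
  shows "(\<lambda>n. of_int \<lfloor>real n * \<theta>\<rfloor> / real n) \<longlonglongrightarrow> \<theta>"
proof (rule tendsto_sandwich[of "\<lambda>n. \<theta> - 1 / real n" _ _ "\<lambda>_. \<theta>"])
  have floor: "real n * \<theta> - 1 \<le> of_int \<lfloor>real n * \<theta>\<rfloor>" "of_int \<lfloor>real n * \<theta>\<rfloor> \<le> real n * \<theta>"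
    for n :: nat
    by linarith+
  show "\<forall>\<^sub>F n in sequentially. \<theta> - 1 / real n \<le> of_int \<lfloor>real n * \<theta>\<rfloor> / real n"
    using eventually_gt_at_top[of "0::nat"]
  proof eventually_elim
    case (elim n)
    then have "\<theta> - 1 / real n = (real n * \<theta> - 1) / real n" by (simp add: field_simps)
    then show ?case using floor(1)[of n] elim by (simp add: divide_right_mono)
  qed
  show "\<forall>\<^sub>F n in sequentially. of_int \<lfloor>real n * \<theta>\<rfloor> / real n \<le> \<theta>"
    using eventually_gt_at_top[of "0::nat"]
    by eventually_elim (use floor(2) in \<open>simp add: divide_le_eq mult.commute\<close>)
  show "(\<lambda>n. \<theta> - 1 / real n) \<longlonglongrightarrow> \<theta>"
    using tendsto_diff[OF tendsto_const lim_1_over_n, of \<theta>] by simp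
qed simp

lemma two_level_ratio_tendsto:
  assumes r: "\<rho> > 1" and c: "c \<in> {1 / \<rho>..1}"
  obtains k :: "nat \<Rightarrow> nat" where "\<And>n. k n \<le> n"
    and "(\<lambda>n. real n / (real (k n) * \<rho> + (real n - real (k n)))) \<longlonglongrightarrow> c"
proof -
  have c_pos: "c > 0" using c r by (auto intro: less_le_trans[of 0 "1 / \<rho>"])
  define \<theta> where "\<theta> = (1 - c) / (c * (\<rho> - 1))"
  have "1 \<le> c * \<rho>" and "c \<le> 1" using c r by (auto simp: field_simps)
  then have \<theta>: "0 \<le> \<theta>" "\<theta> \<le> 1"
    using c_pos r by (auto simp: \<theta>_def divide_le_eq algebra_simps)
  have c_eq: "c = 1 / (1 + \<theta> * (\<rho> - 1))" using c_pos r by (simp add: \<theta>_def field_simps)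
  define k where "k n = nat \<lfloor>real n * \<theta>\<rfloor>" for n
  have k: "real (k n) = of_int \<lfloor>real n * \<theta>\<rfloor>" for n
    using \<theta> by (simp add: k_def)
  have "real (k n) \<le> real n" for n
    using \<theta> mult_left_le[of \<theta> "real n"] unfolding k by linarith
  then have k_le: "k n \<le> n" for n by simp
  have "(\<lambda>n. real (k n) / real n) \<longlonglongrightarrow> \<theta>"
    unfolding k by (rule floor_mult_div_tendsto)
  then have "(\<lambda>n. 1 / (1 + real (k n) / real n * (\<rho> - 1))) \<longlonglongrightarrow> c"
    unfolding c_eq
  proof (intro tendsto_intros)
    show "1 + \<theta> * (\<rho> - 1) \<noteq> 0" using \<theta> r by (simp add: add_nonneg_eq_0_iff)
  qed
  moreover have "\<forall>\<^sub>F n in sequentially. 1 / (1 + real (k n) / real n * (\<rho> - 1))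
      = real n / (real (k n) * \<rho> + (real n - real (k n)))"
    using eventually_gt_at_top[of "0::nat"] by eventually_elim (simp add: field_simps)
  ultimately have "(\<lambda>n. real n / (real (k n) * \<rho> + (real n - real (k n)))) \<longlonglongrightarrow> c"
    by (rule Lim_transform_eventually)
  with k_le that show ?thesis by blast
qed

lemma DA_unif_tendsto_chord_bound:
  assumes r: "\<rho> > 1" and c: "c \<in> {1 / \<rho>..1}"
  obtains Q where "\<And>n. n \<ge> 1 \<Longrightarrow> Q n \<in> Pn n \<rho>"
    and "(\<lambda>n. DA \<alpha> n (U_unif n) (Q n)) \<longlonglongrightarrow> chord_bound \<alpha> \<rho> c"
proof -
  obtain k where k: "\<And>n. k n \<le> n"
    and k_lim: "(\<lambda>n. real n / (real (k n) * \<rho> + (real n - real (k n)))) \<longlonglongrightarrow> c"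
    using two_level_ratio_tendsto[OF r c] by blast
  have "c > 0" using c r by (auto intro: less_le_trans[of 0 "1 / \<rho>"])
  then have "(\<lambda>n. chord_bound \<alpha> \<rho> (real n / (real (k n) * \<rho> + (real n - real (k n)))))
      \<longlonglongrightarrow> chord_bound \<alpha> \<rho> c"
    by (rule isCont_tendsto_compose[OF isCont_chord_bound[OF r] k_lim])
  moreover have "\<forall>\<^sub>F n in sequentially.
      chord_bound \<alpha> \<rho> (real n / (real (k n) * \<rho> + (real n - real (k n))))
      = DA \<alpha> n (U_unif n) (two_level_pmf n (k n) \<rho>)"
    using eventually_ge_at_top[of "1::nat"]
    by (rule eventually_mono) (simp add: DA_unif_two_level_pmf[OF r _ k])
  ultimately have lim: "(\<lambda>n. DA \<alpha> n (U_unif n) (two_level_pmf n (k n) \<rho>)) \<longlonglongrightarrow> chord_bound \<alpha> \<rho> c"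
    by (rule Lim_transform_eventually)
  have "two_level_pmf n (k n) \<rho> \<in> Pn n \<rho>" if "n \<ge> 1" for n
    using two_level_pmf_in_Pn[OF r that k] .
  then show ?thesis using lim by (rule that)
qed

lemma bdd_above_DA_unif:
  assumes "\<rho> > 1" "n \<ge> 1"
  shows "bdd_above ((\<lambda>Q. DA \<alpha> n (U_unif n) Q) ` Pn n \<rho>)"
  using DA_unif_le_Delta[OF assms] by (intro bdd_aboveI2)

lemma SUP_DA_unif_le_Delta:
  assumes r: "\<rho> > 1" and n: "n \<ge> 1"
  shows "(SUP Q\<in>Pn n \<rho>. DA \<alpha> n (U_unif n) Q) \<le> Delta \<alpha> \<rho>"
proof (rule cSUP_least)
  show "Pn n \<rho> \<noteq> {}" using two_level_pmf_in_Pn[OF r n, of 0] by blast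
qed (rule DA_unif_le_Delta[OF r n])

theorem corollary1:
  fixes \<alpha> \<rho> :: real
  assumes "\<rho> > 1"
  shows "(\<lambda>n. SUP Q\<in>Pn n \<rho>. DA \<alpha> n (U_unif n) Q) \<longlonglongrightarrow> Delta \<alpha> \<rho>"
proof -
  let ?sup = "\<lambda>n. SUP Q\<in>Pn n \<rho>. DA \<alpha> n (U_unif n) Q"
  obtain c where c: "c \<in> {1 / \<rho>..1}" and c_opt: "chord_bound \<alpha> \<rho> c = Delta \<alpha> \<rho>"
    using chord_bound_attains_Delta[OF assms] by blast
  obtain Q where Q: "\<And>n. n \<ge> 1 \<Longrightarrow> Q n \<in> Pn n \<rho>"
    and Q_lim: "(\<lambda>n. DA \<alpha> n (U_unif n) (Q n)) \<longlonglongrightarrow> Delta \<alpha> \<rho>"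
    using DA_unif_tendsto_chord_bound[OF assms c, of \<alpha>] unfolding c_opt by blast
  have bounds: "DA \<alpha> n (U_unif n) (Q n) \<le> ?sup n \<and> ?sup n \<le> Delta \<alpha> \<rho>" if n: "n \<ge> 1" for n
    using cSUP_upper[OF Q[OF n] bdd_above_DA_unif[OF assms n]] SUP_DA_unif_le_Delta[OF assms n] by simp
  show ?thesis
  proof (rule tendsto_sandwich[OF _ _ Q_lim tendsto_const])
    show "\<forall>\<^sub>F n in sequentially. DA \<alpha> n (U_unif n) (Q n) \<le> ?sup n"
      using eventually_ge_at_top[of "1::nat"] by (rule eventually_mono) (use bounds in blast)
    show "\<forall>\<^sub>F n in sequentially. ?sup n \<le> Delta \<alpha> \<rho>"
      using eventually_ge_at_top[of "1::nat"] by (rule eventually_mono) (use bounds in blast)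
  qed
qed

end
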